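(* Let $M=\mathrm{Mon}\langle\Sigma\mid R\rangle$ be a finitely presented monoid and $\mathfrak{R}$ a complete rewriting system for $M$. Let $u,v\in\Sigma^*$. If there exists a word $z$ such that $u\sim z$ and $v\sim z$, then $u\equiv_M v$.
   Context: $=_M$ is equality in $M$. A rewriting system is a set of rules $l\to r$ ($l,r\in\Sigma^*$); $plq\to prq$ is one rewriting step; $\mathfrak{R}$ is complete for $M$ if terminating, confluent, and its generated congruence on $\Sigma^*$ is $=_M$. $u\rightsquigarrow v$ means some cyclic conjugate $\tilde u$ of $u$ in $\Sigma^*$ (possibly $u$) satisfies $\tilde u\to v$; $\rightsquigarrow^*$ is its reflexive–transitive closure. For words $u,v$, $u\sim v$ means $u\rightsquigarrow^* v$ and $v\rightsquigarrow^* u$. $u\equiv_M v$ means there exist $x,y\in\Sigma^*$ with $ux=_M xv$ and $yu=_M vy$. *)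

theory Defs
  imports Main
begin

text \<open>Words over the alphabet Sig are lists whose letters lie in Sig (the set lists Sig).
  A rewriting system (or a set of defining relations) is a set of pairs of words.\<close>

definition rstep :: "'a set \<Rightarrow> ('a list \<times> 'a list) set \<Rightarrow> ('a list \<times> 'a list) set" where
  "rstep Sig Rw = {(p @ l @ q, p @ r @ q) | p l r q.
      (l, r) \<in> Rw \<and> p \<in> lists Sig \<and> q \<in> lists Sig}"

definition gen_cong :: "'a set \<Rightarrow> ('a list \<times> 'a list) set \<Rightarrow> ('a list \<times> 'a list) set" where
  "gen_cong Sig R = (rstep Sig R \<union> (rstep Sig R)\<inverse>)\<^sup>* \<inter> (lists Sig \<times> lists Sig)"

definition eqM :: "'a set \<Rightarrow> ('a list \<times> 'a list) set \<Rightarrow> 'a list \<Rightarrow> 'a list \<Rightarrow> bool" where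
  "eqM Sig R u v \<longleftrightarrow> (u, v) \<in> gen_cong Sig R"

definition terminating :: "'a set \<Rightarrow> ('a list \<times> 'a list) set \<Rightarrow> bool" where
  "terminating Sig Rw \<longleftrightarrow> wf ((rstep Sig Rw)\<inverse>)"

definition confluent :: "'a set \<Rightarrow> ('a list \<times> 'a list) set \<Rightarrow> bool" where
  "confluent Sig Rw \<longleftrightarrow> (\<forall>u v w. (u, v) \<in> (rstep Sig Rw)\<^sup>* \<and> (u, w) \<in> (rstep Sig Rw)\<^sup>*
      \<longrightarrow> (\<exists>x. (v, x) \<in> (rstep Sig Rw)\<^sup>* \<and> (w, x) \<in> (rstep Sig Rw)\<^sup>*))"

definition complete_for :: "'a set \<Rightarrow> ('a list \<times> 'a list) set \<Rightarrow> ('a list \<times> 'a list) set \<Rightarrow> bool" where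
  "complete_for Sig R Rw \<longleftrightarrow> terminating Sig Rw \<and> confluent Sig Rw
      \<and> gen_cong Sig Rw = gen_cong Sig R"

definition cstep :: "'a set \<Rightarrow> ('a list \<times> 'a list) set \<Rightarrow> ('a list \<times> 'a list) set" where
  "cstep Sig Rw = {(u, v) | u v a b. u = a @ b \<and> (b @ a, v) \<in> rstep Sig Rw}"

definition csim :: "'a set \<Rightarrow> ('a list \<times> 'a list) set \<Rightarrow> 'a list \<Rightarrow> 'a list \<Rightarrow> bool" where
  "csim Sig Rw u v \<longleftrightarrow> (u, v) \<in> (cstep Sig Rw)\<^sup>* \<and> (v, u) \<in> (cstep Sig Rw)\<^sup>*"

definition conjM :: "'a set \<Rightarrow> ('a list \<times> 'a list) set \<Rightarrow> 'a list \<Rightarrow> 'a list \<Rightarrow> bool" where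
  "conjM Sig R u v \<longleftrightarrow> (\<exists>x \<in> lists Sig. \<exists>y \<in> lists Sig.
      eqM Sig R (u @ x) (x @ v) \<and> eqM Sig R (y @ u) (v @ y))"

end

theory Submission
  imports Defs
begin

text \<open>A rewriting step on a cyclic conjugate \<open>ba\<close> of \<open>u = ab\<close> yields a word equal in \<open>M\<close> to
  \<open>ba\<close>, and \<open>ab\<close> and \<open>ba\<close> are conjugate in the required sense, witnessed by
  \<open>(ab)a = a(ba)\<close> and \<open>b(ab) = (ba)b\<close>. Since the rewriting congruence of a complete system is
  \<open>=\<^sub>M\<close>, every \<open>\<rightsquigarrow>\<close>-step is an instance of \<open>\<equiv>\<^sub>M\<close>. Finally \<open>\<equiv>\<^sub>M\<close> is an equivalence
  relation (witnesses concatenate), so \<open>u \<rightsquigarrow>\<^sup>* z\<close> and \<open>v \<rightsquigarrow>\<^sup>* z\<close> already give \<open>u \<equiv>\<^sub>M v\<close>.\<close>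

lemma rstep_append_context:
  assumes "(s, t) \<in> rstep Sig R" "p \<in> lists Sig" "q \<in> lists Sig"
  shows "(p @ s @ q, p @ t @ q) \<in> rstep Sig R"
proof -
  from assms(1) obtain p' l r q' where "s = p' @ l @ q'" "t = p' @ r @ q'" "(l, r) \<in> R"
    "p' \<in> lists Sig" "q' \<in> lists Sig" unfolding rstep_def by blast
  then have "p @ s @ q = (p @ p') @ l @ (q' @ q)" "p @ t @ q = (p @ p') @ r @ (q' @ q)"
    "p @ p' \<in> lists Sig" "q' @ q \<in> lists Sig"
    using assms(2,3) by simp_all
  with \<open>(l, r) \<in> R\<close> show ?thesis unfolding rstep_def by blast
qed

lemma rstep_lists:
  assumes "(s, t) \<in> rstep Sig R" "R \<subseteq> lists Sig \<times> lists Sig"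
  shows "s \<in> lists Sig" "t \<in> lists Sig"
  using assms unfolding rstep_def by fastforce+

lemma eqM_append_context:
  assumes "eqM Sig R s t" "p \<in> lists Sig" "q \<in> lists Sig"
  shows "eqM Sig R (p @ s @ q) (p @ t @ q)"
proof -
  let ?E = "rstep Sig R \<union> (rstep Sig R)\<inverse>"
  have "(s, t) \<in> ?E\<^sup>*" using assms(1) unfolding eqM_def gen_cong_def by blast
  then have "(p @ s @ q, p @ t @ q) \<in> ?E\<^sup>*"
  proof (induction rule: rtrancl_induct)
    case (step y z)
    then have "(p @ y @ q, p @ z @ q) \<in> ?E"
      using rstep_append_context[OF _ assms(2,3)] by auto
    with step.IH show ?case by (rule rtrancl_into_rtrancl)
  qed simp
  with assms show ?thesis unfolding eqM_def gen_cong_def by auto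
qed

lemma eqM_refl: "s \<in> lists Sig \<Longrightarrow> eqM Sig R s s"
  unfolding eqM_def gen_cong_def by auto

lemma eqM_sym: "eqM Sig R s t \<Longrightarrow> eqM Sig R t s"
  unfolding eqM_def gen_cong_def
  using sym_rtrancl[OF sym_Un_converse, of "rstep Sig R"] by (auto dest: symD)

lemma eqM_trans [trans]: "eqM Sig R s t \<Longrightarrow> eqM Sig R t w \<Longrightarrow> eqM Sig R s w"
  unfolding eqM_def gen_cong_def by (auto intro: rtrancl_trans)

lemma eqM_if_rstep:
  assumes "(s, t) \<in> rstep Sig R" "R \<subseteq> lists Sig \<times> lists Sig"
  shows "eqM Sig R s t"
  using assms rstep_lists[OF assms] unfolding eqM_def gen_cong_def by auto

lemma conjM_refl: "s \<in> lists Sig \<Longrightarrow> conjM Sig R s s"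
  unfolding conjM_def by (auto intro!: bexI[of _ "[]"] eqM_refl)

lemma conjM_sym: "conjM Sig R s t \<Longrightarrow> conjM Sig R t s"
  unfolding conjM_def by (meson eqM_sym)

lemma conjM_trans:
  assumes "conjM Sig R s t" "conjM Sig R t w"
  shows "conjM Sig R s w"
proof -
  from assms obtain x1 y1 x2 y2 where
    lists: "x1 \<in> lists Sig" "y1 \<in> lists Sig" "x2 \<in> lists Sig" "y2 \<in> lists Sig" and
    st: "eqM Sig R (s @ x1) (x1 @ t)" "eqM Sig R (y1 @ s) (t @ y1)" and
    tw: "eqM Sig R (t @ x2) (x2 @ w)" "eqM Sig R (y2 @ t) (w @ y2)"
    unfolding conjM_def by blast
  have "eqM Sig R (s @ x1 @ x2) (x1 @ t @ x2)"
    using eqM_append_context[OF st(1), of "[]" x2] lists by simp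
  also have "eqM Sig R (x1 @ t @ x2) (x1 @ x2 @ w)"
    using eqM_append_context[OF tw(1), of x1 "[]"] lists by simp
  finally have x: "eqM Sig R (s @ x1 @ x2) ((x1 @ x2) @ w)"
    by simp
  have "eqM Sig R (y2 @ y1 @ s) (y2 @ t @ y1)"
    using eqM_append_context[OF st(2), of y2 "[]"] lists by simp
  also have "eqM Sig R (y2 @ t @ y1) (w @ y2 @ y1)"
    using eqM_append_context[OF tw(2), of "[]" y1] lists by simp
  finally have y: "eqM Sig R ((y2 @ y1) @ s) (w @ y2 @ y1)"
    by simp
  have "x1 @ x2 \<in> lists Sig" "y2 @ y1 \<in> lists Sig" using lists by simp_all
  with x y show ?thesis unfolding conjM_def by blast
qed

lemma conjM_if_eqM_rotate:
  assumes "eqM Sig R (b @ a) t" "a \<in> lists Sig" "b \<in> lists Sig"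
  shows "conjM Sig R (a @ b) t"
  using eqM_append_context[OF assms(1), of a "[]"] eqM_append_context[OF assms(1), of "[]" b]
    assms(2,3) unfolding conjM_def by auto

lemma conjM_if_cstep:
  assumes "(s, t) \<in> cstep Sig Rw" "s \<in> lists Sig" "Rw \<subseteq> lists Sig \<times> lists Sig"
    and "gen_cong Sig Rw = gen_cong Sig R"
  shows "conjM Sig R s t" "t \<in> lists Sig"
proof -
  from assms(1) obtain a b where ab: "s = a @ b" "(b @ a, t) \<in> rstep Sig Rw"
    unfolding cstep_def by blast
  have "eqM Sig R (b @ a) t"
    using eqM_if_rstep[OF ab(2) assms(3)] assms(4) unfolding eqM_def by simp
  with ab(1) assms(2) show "conjM Sig R s t" by (auto intro: conjM_if_eqM_rotate)
  show "t \<in> lists Sig" using rstep_lists[OF ab(2) assms(3)] by simp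
qed

lemma conjM_if_rtrancl_cstep:
  assumes "(s, t) \<in> (cstep Sig Rw)\<^sup>*" "s \<in> lists Sig" "Rw \<subseteq> lists Sig \<times> lists Sig"
    and "gen_cong Sig Rw = gen_cong Sig R"
  shows "conjM Sig R s t"
proof -
  from assms(1) have "conjM Sig R s t \<and> t \<in> lists Sig"
  proof (induction rule: rtrancl_induct)
    case base
    with assms(2) show ?case by (simp add: conjM_refl)
  next
    case (step y z)
    with conjM_if_cstep[OF step(2) _ assms(3,4)] show ?case by (blast intro: conjM_trans)
  qed
  then show ?thesis ..
qed

theorem proposition7p3:
  fixes Sig :: "'a set" and R Rw :: "('a list \<times> 'a list) set" and u v :: "'a list"
  assumes "finite Sig" and "finite R"
    and "R \<subseteq> lists Sig \<times> lists Sig"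
    and "Rw \<subseteq> lists Sig \<times> lists Sig"
    and "complete_for Sig R Rw"
    and "u \<in> lists Sig" and "v \<in> lists Sig"
    and "\<exists>z \<in> lists Sig. csim Sig Rw u z \<and> csim Sig Rw v z"
  shows "conjM Sig R u v"
proof -
  have cong: "gen_cong Sig Rw = gen_cong Sig R"
    using assms(5) unfolding complete_for_def by simp
  from assms(8) obtain z where "(u, z) \<in> (cstep Sig Rw)\<^sup>*" "(v, z) \<in> (cstep Sig Rw)\<^sup>*"
    unfolding csim_def by blast
  with assms(4,6,7) cong have "conjM Sig R u z" "conjM Sig R v z"
    by (auto intro: conjM_if_rtrancl_cstep)
  then show ?thesis by (blast intro: conjM_sym conjM_trans)
qed

end
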